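(* For $n,m\ge 0$ let $f(n,m)$ be the number of linked cycles $\hat\pi$ on $[n]$ with exactly $m$ singly covered minimal elements. Then $f(1,1)=1$, $f(n,0)=0$ for $n\ge1$, $f(n,m)=0$ if $n<m$, and for all $n\ge2$, $m\ge1$, $$f(n,m)=(2(n-1)-m)f(n-1,m)+f(n-1,m-1).$$
   Context: Two finite sets of integers $E,F$ are nearly disjoint if for every $i\in E\cap F$ either ($i=\min(E)$, $|E|>1$, $i\ne\min(F)$) or ($i=\min(F)$, $|F|>1$, $i\ne\min(E)$). A linked partition of $[n]$ is a set of nonempty subsets (blocks) of $[n]$ with union $[n]$, any two distinct blocks nearly disjoint; each element lies in one or two blocks (singly/doubly covered). A singly covered minimal element is a singly covered element that is the minimum of its block. A linked cycle on $[n]$ is a linked partition of $[n]$ together with a cyclic arrangement of the elements of each block (two linked cycles differ if the partitions or some cyclic arrangement differ). *)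

theory Defs
  imports Main
begin

definition nearly_disjoint :: "'a::linorder set \<Rightarrow> 'a set \<Rightarrow> bool" where
  "nearly_disjoint E F \<longleftrightarrow>
     (\<forall>i\<in>E \<inter> F. (i = Min E \<and> card E > 1 \<and> i \<noteq> Min F)
                 \<or> (i = Min F \<and> card F > 1 \<and> i \<noteq> Min E))"

definition linked_partition :: "nat \<Rightarrow> nat set set \<Rightarrow> bool" where
  "linked_partition n P \<longleftrightarrow>
     (\<forall>B\<in>P. B \<noteq> {} \<and> B \<subseteq> {1..n}) \<and> \<Union>P = {1..n} \<and>
     (\<forall>E\<in>P. \<forall>F\<in>P. E \<noteq> F \<longrightarrow> nearly_disjoint E F)"

definition cyclic_arrangement :: "'a set \<Rightarrow> 'a list set \<Rightarrow> bool" where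
  "cyclic_arrangement B C \<longleftrightarrow>
     (\<exists>xs. distinct xs \<and> set xs = B \<and> C = {rotate k xs | k. True})"

definition linked_cycle :: "nat \<Rightarrow> nat set set \<Rightarrow> (nat set \<Rightarrow> nat list set) \<Rightarrow> bool" where
  "linked_cycle n P A \<longleftrightarrow> linked_partition n P \<and>
     (\<forall>B\<in>P. cyclic_arrangement B (A B)) \<and> (\<forall>B. B \<notin> P \<longrightarrow> A B = {})"

definition singly_covered_minimal :: "nat \<Rightarrow> nat set set \<Rightarrow> nat set" where
  "singly_covered_minimal n P =
     {i \<in> {1..n}. card {B \<in> P. i \<in> B} = 1 \<and> (\<forall>B\<in>P. i \<in> B \<longrightarrow> i = Min B)}"

definition f_lc :: "nat \<Rightarrow> nat \<Rightarrow> nat" where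
  "f_lc n m = card {(P, A). linked_cycle n P A \<and> card (singly_covered_minimal n P) = m}"

end

theory Submission
  imports Defs "HOL-Combinatorics.Multiset_Permutations" "HOL-Library.FuncSet"
begin

text \<open>A block \<open>B\<close> carries \<open>(|B| - 1)!\<close> cyclic arrangements, so \<open>f(n, m)\<close> is the sum of
  \<open>\<Prod>B\<in>P. (|B| - 1)!\<close> over the linked partitions \<open>P\<close> of \<open>[n]\<close> with \<open>m\<close> singly covered
  minimal elements. Each linked partition of \<open>[k + 1]\<close> arises in exactly one way from a
  linked partition \<open>Q\<close> of \<open>[k]\<close>: either \<open>k + 1\<close> forms a new singleton block, or it is added
  to a block \<open>B\<close> of \<open>Q\<close>, or it forms a new block \<open>{b, k + 1}\<close> with an element \<open>b\<close> that is
  singly covered but not the minimum of its block. The first move creates one new singly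
  covered minimal element and keeps the weight, the second multiplies the weight by \<open>|B|\<close>,
  the third changes neither. As every element of \<open>[k]\<close> lies in one or two blocks, the
  moves of the last two kinds are \<open>\<Sum>B\<in>Q. |B|\<close> plus the number of singly covered
  non-minimal elements, that is \<open>2k\<close> minus the number of singly covered minimal ones.\<close>

section \<open>Cyclic arrangements\<close>

definition rotations :: "'a list \<Rightarrow> 'a list set" where
  "rotations xs = range (\<lambda>k. rotate k xs)"

lemma cyclic_arrangement_iff:
  "cyclic_arrangement B C \<longleftrightarrow> (\<exists>xs. distinct xs \<and> set xs = B \<and> C = rotations xs)"
  unfolding cyclic_arrangement_def rotations_def by (simp add: full_SetCompr_eq)

lemma rotations_rotate: "rotations (rotate j xs) = rotations xs"
proof (cases "xs = []")
  case False
  let ?L = "length xs"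
  have "rotate k xs = rotate (k + ?L - j mod ?L) (rotate j xs)" for k
  proof -
    have "j mod ?L \<le> ?L" using False by (simp add: less_imp_le)
    then have "rotate (k + ?L - j mod ?L) (rotate (j mod ?L) xs) = rotate (k + ?L) xs"
      by (simp add: rotate_rotate)
    also have "\<dots> = rotate k xs"
      using rotate_conv_mod[of "k + ?L" xs] rotate_conv_mod[of k xs] by simp
    finally show ?thesis
      using rotate_conv_mod[of j xs] by simp
  qed
  then show ?thesis unfolding rotations_def by (auto simp: rotate_rotate)
qed (simp add: rotations_def)

lemma rotation_fixing_head:
  assumes "distinct xs" "xs \<noteq> []" "hd (rotate j xs) = hd xs"
  shows "rotate j xs = xs"
proof -
  have "xs ! (j mod length xs) = xs ! 0"
    using assms hd_rotate_conv_nth[of xs j] by (simp add: hd_conv_nth)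
  then have "j mod length xs = 0"
    using assms by (simp add: nth_eq_iff_index_eq)
  then show ?thesis by (rule rotate_id)
qed

lemma rotations_Cons_inj:
  assumes "distinct (a # ys)" and "rotations (a # xs) = rotations (a # ys)"
  shows "xs = ys"
proof -
  have "a # xs \<in> rotations (a # xs)"
    unfolding rotations_def by (rule range_eqI[where x = 0]) simp
  then have "a # xs \<in> rotations (a # ys)"
    using assms(2) by simp
  then obtain j where j: "a # xs = rotate j (a # ys)"
    unfolding rotations_def by auto
  then have "rotate j (a # ys) = a # ys"
    using rotation_fixing_head[OF assms(1)] by (metis list.sel(1) list.simps(3))
  then show ?thesis using j by simp
qed

lemma bij_betw_permutations_cyclic_arrangements:
  assumes "a \<in> B"
  shows "bij_betw (\<lambda>xs. rotations (a # xs)) (permutations_of_set (B - {a}))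
           {C. cyclic_arrangement B C}"
proof (rule bij_betwI')
  fix xs ys assume "ys \<in> permutations_of_set (B - {a})"
  then have "distinct (a # ys)" by (auto simp: permutations_of_set_def)
  then show "(rotations (a # xs) = rotations (a # ys)) = (xs = ys)"
    using rotations_Cons_inj[of a ys xs] by auto
next
  fix xs assume "xs \<in> permutations_of_set (B - {a})"
  then have "distinct (a # xs)" "set (a # xs) = B"
    using assms by (auto simp: permutations_of_set_def)
  then show "rotations (a # xs) \<in> {C. cyclic_arrangement B C}"
    unfolding cyclic_arrangement_iff by blast
next
  fix C assume "C \<in> {C. cyclic_arrangement B C}"
  then obtain zs where zs: "distinct zs" "set zs = B" "C = rotations zs"
    unfolding cyclic_arrangement_iff by auto
  obtain j where j: "j < length zs" "zs ! j = a"
    using assms zs by (metis in_set_conv_nth)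
  then have "zs \<noteq> []" by auto
  then have "hd (rotate j zs) = a"
    using hd_rotate_conv_nth[of zs j] j by simp
  then obtain ws where ws: "rotate j zs = a # ws"
    using j by (cases "rotate j zs") auto
  have "distinct (a # ws)" "set (a # ws) = B"
    using zs ws by (metis distinct_rotate, metis set_rotate)
  then have "ws \<in> permutations_of_set (B - {a})"
    unfolding permutations_of_set_def by auto
  moreover have "C = rotations (a # ws)"
    using zs ws rotations_rotate by metis
  ultimately show "\<exists>xs\<in>permutations_of_set (B - {a}). C = rotations (a # xs)"
    by blast
qed

lemma
  assumes "finite B" "B \<noteq> {}"
  shows card_cyclic_arrangements: "card {C. cyclic_arrangement B C} = fact (card B - 1)"
    and finite_cyclic_arrangements: "finite {C. cyclic_arrangement B C}"
proof -
  obtain a where a: "a \<in> B" using assms by blast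
  note bij = bij_betw_permutations_cyclic_arrangements[OF a]
  show "card {C. cyclic_arrangement B C} = fact (card B - 1)"
    using bij_betw_same_card[OF bij] assms a by simp
  show "finite {C. cyclic_arrangement B C}"
    using bij_betw_finite[OF bij] assms by simp
qed

definition arrangements :: "'a set set \<Rightarrow> ('a set \<Rightarrow> 'a list set) set" where
  "arrangements P =
     {A. (\<forall>B\<in>P. cyclic_arrangement B (A B)) \<and> (\<forall>B. B \<notin> P \<longrightarrow> A B = {})}"

lemma bij_betw_arrangements_PiE:
  "bij_betw (\<lambda>A. restrict A P) (arrangements P) (\<Pi>\<^sub>E B\<in>P. {C. cyclic_arrangement B C})"
  by (rule bij_betw_byWitness[where f' = "\<lambda>g B. if B \<in> P then g B else {}"])
    (auto simp: arrangements_def fun_eq_iff PiE_def Pi_def extensional_def)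

lemma
  assumes "finite P" "\<And>B. B \<in> P \<Longrightarrow> finite B \<and> B \<noteq> {}"
  shows card_arrangements: "card (arrangements P) = (\<Prod>B\<in>P. fact (card B - 1))"
    and finite_arrangements: "finite (arrangements P)"
proof -
  note bij = bij_betw_arrangements_PiE[of P]
  have "card (arrangements P) = (\<Prod>B\<in>P. card {C. cyclic_arrangement B C})"
    using bij_betw_same_card[OF bij] card_PiE[OF assms(1)] by simp
  also have "\<dots> = (\<Prod>B\<in>P. fact (card B - 1))"
    using assms(2) card_cyclic_arrangements by (intro prod.cong) auto
  finally show "card (arrangements P) = (\<Prod>B\<in>P. fact (card B - 1))" .
  show "finite (arrangements P)"
    using bij_betw_finite[OF bij] assms finite_cyclic_arrangements by (auto intro: finite_PiE)
qed

section \<open>Nearly disjoint sets and linked partitions\<close>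

lemma nearly_disjoint_commute: "nearly_disjoint E F \<longleftrightarrow> nearly_disjoint F E"
  unfolding nearly_disjoint_def by blast

lemma nearly_disjoint_if_disjoint: "E \<inter> F = {} \<Longrightarrow> nearly_disjoint E F"
  unfolding nearly_disjoint_def by blast

lemma nearly_disjoint_Min_xor:
  "nearly_disjoint E F \<Longrightarrow> i \<in> E \<Longrightarrow> i \<in> F \<Longrightarrow> (i = Min E) \<noteq> (i = Min F)"
  unfolding nearly_disjoint_def by blast

lemma Min_insert_greater:
  fixes n :: "'a::linorder"
  assumes "finite B" "B \<noteq> {}" "\<forall>x\<in>B. x < n"
  shows "Min (insert n B) = Min B"
proof -
  have "Min B < n" using assms by simp
  then show ?thesis using Min_insert[OF assms(1,2)] by simp
qed

lemma nearly_disjoint_insert_greater: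
  fixes n :: "'a::linorder"
  assumes B: "finite B" "B \<noteq> {}" "\<forall>x\<in>B. x < n" and "n \<notin> F"
    and nd: "nearly_disjoint B F"
  shows "nearly_disjoint (insert n B) F"
  unfolding nearly_disjoint_def Min_insert_greater[OF B]
proof
  fix i assume "i \<in> insert n B \<inter> F"
  then have "i \<in> B \<inter> F" using \<open>n \<notin> F\<close> by blast
  then have "i = Min B \<and> i \<noteq> Min F \<or> i = Min F \<and> 1 < card F \<and> i \<noteq> Min B"
    using nd unfolding nearly_disjoint_def by blast
  moreover have "1 < card (insert n B)"
  proof -
    have "n \<notin> B" using B(3) by blast
    then show ?thesis using B(1,2) by (simp add: card_gt_0_iff)
  qed
  ultimately show "i = Min B \<and> 1 < card (insert n B) \<and> i \<noteq> Min F
      \<or> i = Min F \<and> 1 < card F \<and> i \<noteq> Min B" by blast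
qed

lemma nearly_disjoint_remove_greater:
  fixes n :: "'a::linorder"
  assumes B: "finite B" "B \<noteq> {}" "\<forall>x\<in>B. x < n" and "n \<notin> F"
    and nd: "nearly_disjoint (insert n B) F" and shared: "card B = 1 \<Longrightarrow> Min B \<notin> F"
  shows "nearly_disjoint B F"
  unfolding nearly_disjoint_def
proof
  fix i assume i: "i \<in> B \<inter> F"
  then have "i = Min B \<and> i \<noteq> Min F \<or> i = Min F \<and> 1 < card F \<and> i \<noteq> Min B"
    using nd unfolding nearly_disjoint_def Min_insert_greater[OF B] by blast
  moreover have "i = Min B \<Longrightarrow> 1 < card B"
    using shared i B(1,2) by (metis IntD2 card_0_eq less_one linorder_neqE_nat)
  ultimately show "i = Min B \<and> 1 < card B \<and> i \<noteq> Min F \<or> i = Min F \<and> 1 < card F \<and> i \<noteq> Min B"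
    by blast
qed

lemma nearly_disjoint_pair:
  fixes b n :: "'a::linorder"
  assumes "b < n" "n \<notin> F" "b \<in> F \<Longrightarrow> b \<noteq> Min F"
  shows "nearly_disjoint {b, n} F"
  unfolding nearly_disjoint_def
proof
  fix i assume "i \<in> {b, n} \<inter> F"
  then have "i = b" "b \<in> F" using assms(2) by auto
  moreover have "Min {b, n} = b" "card {b, n} = 2" using assms(1) by auto
  ultimately show "i = Min {b, n} \<and> 1 < card {b, n} \<and> i \<noteq> Min F
      \<or> i = Min F \<and> 1 < card F \<and> i \<noteq> Min {b, n}"
    using assms(3) by simp
qed

lemma linked_partition_iff:
  "linked_partition n P \<longleftrightarrow>
     (\<forall>B\<in>P. B \<noteq> {} \<and> B \<subseteq> {1..n}) \<and> \<Union>P = {1..n} \<and> pairwise nearly_disjoint P"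
  unfolding linked_partition_def pairwise_def ..

lemma linked_partition_insert:
  assumes "\<forall>C\<in>Q. C \<noteq> {} \<and> C \<subseteq> {1..n}" "X \<noteq> {}" "X \<subseteq> {1..n}" "\<Union>Q \<union> X = {1..n}"
    and "pairwise nearly_disjoint Q" "\<And>F. F \<in> Q \<Longrightarrow> F \<noteq> X \<Longrightarrow> nearly_disjoint X F"
  shows "linked_partition n (insert X Q)"
proof -
  have "pairwise nearly_disjoint (insert X Q)"
    unfolding pairwise_insert using assms(5,6) nearly_disjoint_commute by blast
  then show ?thesis unfolding linked_partition_iff using assms(1-4) by auto
qed

context
  fixes n :: nat and P :: "nat set set"
  assumes lp: "linked_partition n P"
begin

lemma linked_partition_block:
  assumes "B \<in> P"
  shows "B \<noteq> {}" "B \<subseteq> {1..n}" "finite B"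
  using assms lp finite_subset[of B "{1..n}"] unfolding linked_partition_def by auto

lemma linked_partition_finite: "finite P"
proof (rule finite_subset)
  show "P \<subseteq> Pow {1..n}" using linked_partition_block by blast
qed simp

lemma linked_partition_nearly_disjoint:
  "E \<in> P \<Longrightarrow> F \<in> P \<Longrightarrow> E \<noteq> F \<Longrightarrow> nearly_disjoint E F"
  using lp unfolding linked_partition_def by blast

lemma linked_partition_no_three_blocks:
  assumes "E \<in> P" "F \<in> P" "G \<in> P" "E \<noteq> F" "E \<noteq> G" "F \<noteq> G" "i \<in> E" "i \<in> F" "i \<in> G"
  shows False
proof -
  have "(i = Min E) \<noteq> (i = Min F)" "(i = Min E) \<noteq> (i = Min G)" "(i = Min F) \<noteq> (i = Min G)"
    using nearly_disjoint_Min_xor linked_partition_nearly_disjoint assms by blast+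
  then show False by blast
qed

lemma linked_partition_inj_on_Min: "inj_on Min P"
proof (rule inj_onI)
  fix E F assume "E \<in> P" "F \<in> P" "Min E = Min F"
  moreover have "Min E \<in> E" "Min F \<in> F"
    using \<open>E \<in> P\<close> \<open>F \<in> P\<close> linked_partition_block(1,3) by auto
  ultimately show "E = F"
    using nearly_disjoint_Min_xor linked_partition_nearly_disjoint by metis
qed

lemma linked_partition_covering_card:
  assumes "i \<in> {1..n}"
  shows "card {B \<in> P. i \<in> B} = 1 \<or> card {B \<in> P. i \<in> B} = 2"
proof -
  let ?S = "{B \<in> P. i \<in> B}"
  have "?S \<noteq> {}" using lp assms unfolding linked_partition_def by auto
  then have "card ?S \<noteq> 0" using linked_partition_finite by simp
  moreover have "\<not> 3 \<le> card ?S"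
  proof
    assume "3 \<le> card ?S"
    then obtain T where T: "T \<subseteq> ?S" "card T = 3" by (rule obtain_subset_with_card_n)
    then obtain E F G where "T = {E, F, G}" "E \<noteq> F" "F \<noteq> G" "E \<noteq> G"
      by (meson card_3_iff)
    then show False using linked_partition_no_three_blocks[of E F G i] T(1) by auto
  qed
  ultimately show ?thesis by linarith
qed

lemma linked_partition_singleton_block:
  assumes "{b} \<in> P" "F \<in> P" "b \<in> F"
  shows "F = {b}"
proof (rule ccontr)
  assume "F \<noteq> {b}"
  then have "(b = Min {b}) \<noteq> (b = Min F)"
    using nearly_disjoint_Min_xor linked_partition_nearly_disjoint assms by blast
  then have "b \<noteq> Min F" by simp
  then show False
    using linked_partition_nearly_disjoint[OF assms(1,2)] \<open>F \<noteq> {b}\<close> assms(3)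
    unfolding nearly_disjoint_def by auto
qed

text \<open>The largest element \<open>n\<close> can only be the minimum of the singleton \<open>{n}\<close>, so it
  is never shared.\<close>
lemma linked_partition_last_block_unique:
  assumes "B \<in> P" "n \<in> B" "C \<in> P" "n \<in> C"
  shows "B = C"
proof (rule ccontr)
  assume "B \<noteq> C"
  have small: "card X \<le> 1" if "X \<in> P" "n \<in> X" "n = Min X" for X
  proof -
    have "X \<subseteq> {n}"
    proof
      fix x assume "x \<in> X"
      have "Min X \<le> x" using Min_le linked_partition_block(3) that(1) \<open>x \<in> X\<close> by blast
      moreover have "x \<le> n" using linked_partition_block(2)[OF that(1)] \<open>x \<in> X\<close> by auto
      ultimately show "x \<in> {n}" using that(3) by simp
    qed
    then show ?thesis using card_mono[of "{n}" X] by simp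
  qed
  have "n = Min B \<and> 1 < card B \<or> n = Min C \<and> 1 < card C"
    using linked_partition_nearly_disjoint[OF assms(1,3) \<open>B \<noteq> C\<close>] assms(2,4)
    unfolding nearly_disjoint_def by blast
  then show False using small assms by fastforce
qed

end

definition linked_partitions :: "nat \<Rightarrow> nat set set set" where
  "linked_partitions n = {P. linked_partition n P}"

lemma finite_linked_partitions: "finite (linked_partitions n)"
proof (rule finite_subset)
  show "linked_partitions n \<subseteq> Pow (Pow {1..n})"
    unfolding linked_partitions_def using linked_partition_block(2) by blast
qed simp

definition singly_covered_nonminimal :: "nat \<Rightarrow> nat set set \<Rightarrow> nat set" where
  "singly_covered_nonminimal n P =
     {i \<in> {1..n}. card {B \<in> P. i \<in> B} = 1 \<and> \<not> (\<forall>B\<in>P. i \<in> B \<longrightarrow> i = Min B)}"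

lemma singly_covered_nonminimal_iff:
  "b \<in> singly_covered_nonminimal n P \<longleftrightarrow>
     b \<in> {1..n} \<and> (\<exists>F\<in>P. b \<in> F \<and> b \<noteq> Min F \<and> (\<forall>G\<in>P. b \<in> G \<longrightarrow> G = F))"
proof
  assume "b \<in> singly_covered_nonminimal n P"
  then have b: "b \<in> {1..n}" "card {B \<in> P. b \<in> B} = 1" "\<exists>B\<in>P. b \<in> B \<and> b \<noteq> Min B"
    unfolding singly_covered_nonminimal_def by auto
  then obtain F where F: "{B \<in> P. b \<in> B} = {F}"
    using card_1_singleton_iff[of "{B \<in> P. b \<in> B}"] by (auto simp del: One_nat_def)
  then have "F \<in> P" "b \<in> F" "\<forall>G\<in>P. b \<in> G \<longrightarrow> G = F" by auto
  then show "b \<in> {1..n} \<and> (\<exists>F\<in>P. b \<in> F \<and> b \<noteq> Min F \<and> (\<forall>G\<in>P. b \<in> G \<longrightarrow> G = F))"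
    using b by blast
next
  assume "b \<in> {1..n} \<and> (\<exists>F\<in>P. b \<in> F \<and> b \<noteq> Min F \<and> (\<forall>G\<in>P. b \<in> G \<longrightarrow> G = F))"
  then obtain F where F: "b \<in> {1..n}" "F \<in> P" "b \<in> F" "b \<noteq> Min F"
    "\<forall>G\<in>P. b \<in> G \<longrightarrow> G = F"
    by blast
  have "{B \<in> P. b \<in> B} = {F}" using F(2,3,5) by blast
  then show "b \<in> singly_covered_nonminimal n P"
    unfolding singly_covered_nonminimal_def using F(1-4) by auto
qed

lemma singly_covered_minimal_cong:
  assumes cover: "{C \<in> P'. i \<in> C} = \<phi> ` {C \<in> P. i \<in> C}" and "inj_on \<phi> {C \<in> P. i \<in> C}"
    and Min: "\<And>C. C \<in> P \<Longrightarrow> i \<in> C \<Longrightarrow> Min (\<phi> C) = Min C"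
    and range: "i \<in> {1..n'} \<longleftrightarrow> i \<in> {1..n}"
  shows "i \<in> singly_covered_minimal n' P' \<longleftrightarrow> i \<in> singly_covered_minimal n P"
proof -
  have card: "card {C \<in> P'. i \<in> C} = card {C \<in> P. i \<in> C}"
    unfolding cover using assms(2) by (rule card_image)
  have "(\<forall>C\<in>P'. i \<in> C \<longrightarrow> i = Min C) \<longleftrightarrow> (\<forall>C\<in>{C \<in> P'. i \<in> C}. i = Min C)"
    by blast
  also have "\<dots> \<longleftrightarrow> (\<forall>C\<in>{C \<in> P. i \<in> C}. i = Min (\<phi> C))"
    unfolding cover by blast
  also have "\<dots> \<longleftrightarrow> (\<forall>C\<in>P. i \<in> C \<longrightarrow> i = Min C)"
    using Min by auto
  finally have mins: "(\<forall>C\<in>P'. i \<in> C \<longrightarrow> i = Min C) \<longleftrightarrow> (\<forall>C\<in>P. i \<in> C \<longrightarrow> i = Min C)" .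
  show ?thesis
    unfolding singly_covered_minimal_def by (simp only: mem_Collect_eq card mins range)
qed

lemma singly_covered_minimal_insert_avoiding:
  assumes "i \<notin> X" "i \<noteq> Suc k"
  shows "i \<in> singly_covered_minimal (Suc k) (insert X Q) \<longleftrightarrow> i \<in> singly_covered_minimal k Q"
proof (rule singly_covered_minimal_cong[where \<phi> = id])
  show "{C \<in> insert X Q. i \<in> C} = id ` {C \<in> Q. i \<in> C}" using assms(1) by auto
qed (use assms(2) in auto)

lemma sum_card_blocks:
  assumes "linked_partition n P"
  shows "(\<Sum>B\<in>P. card B) = (\<Sum>i\<in>{1..n}. card {B \<in> P. i \<in> B})"
proof -
  have "(\<Sum>B\<in>P. card B) = (\<Sum>B\<in>P. card {i \<in> {1..n}. i \<in> B})"
  proof (rule sum.cong)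
    fix B assume "B \<in> P"
    then have "{i \<in> {1..n}. i \<in> B} = B" using linked_partition_block(2)[OF assms] by blast
    then show "card B = card {i \<in> {1..n}. i \<in> B}" by simp
  qed simp
  also have "\<dots> = (\<Sum>i\<in>{1..n}. card {B \<in> P. i \<in> B})"
    using linked_partition_finite[OF assms] by (intro sum_multicount_gen) auto
  finally show ?thesis .
qed

lemma card_singly_covered:
  "card (singly_covered_nonminimal n P) + card (singly_covered_minimal n P)
     = (\<Sum>i\<in>{1..n}. if card {B \<in> P. i \<in> B} = 1 then 1 else 0)"
proof -
  let ?c = "\<lambda>i. card {B \<in> P. i \<in> B}"
  have fin: "finite (singly_covered_nonminimal n P)" "finite (singly_covered_minimal n P)"
    unfolding singly_covered_nonminimal_def singly_covered_minimal_def by simp_all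
  have "card (singly_covered_nonminimal n P) + card (singly_covered_minimal n P)
      = card (singly_covered_nonminimal n P \<union> singly_covered_minimal n P)"
    by (rule card_Un_disjoint[symmetric, OF fin])
      (auto simp: singly_covered_nonminimal_def singly_covered_minimal_def)
  also have "singly_covered_nonminimal n P \<union> singly_covered_minimal n P = {i \<in> {1..n}. ?c i = 1}"
    unfolding singly_covered_nonminimal_def singly_covered_minimal_def by blast
  also have "card \<dots> = (\<Sum>i\<in>{1..n}. if ?c i = 1 then 1 else 0)"
    using sum.inter_filter[of "{1..n}" "\<lambda>_. 1::nat" "\<lambda>i. ?c i = 1"] by simp
  finally show ?thesis .
qed

lemma linked_partition_double_count:
  assumes lp: "linked_partition n P"
  shows "(\<Sum>B\<in>P. card B) + card (singly_covered_nonminimal n P)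
           + card (singly_covered_minimal n P) = 2 * n"
proof -
  let ?c = "\<lambda>i. card {B \<in> P. i \<in> B}"
  have "(\<Sum>B\<in>P. card B) + card (singly_covered_nonminimal n P) + card (singly_covered_minimal n P)
      = (\<Sum>i\<in>{1..n}. ?c i) + (\<Sum>i\<in>{1..n}. if ?c i = 1 then 1 else 0)"
    by (simp only: add.assoc card_singly_covered sum_card_blocks[OF lp])
  also have "\<dots> = (\<Sum>i\<in>{1..n}. ?c i + (if ?c i = 1 then 1 else 0))"
    by (rule sum.distrib[symmetric])
  also have "\<dots> = (\<Sum>i\<in>{1..n}. 2)"
    using linked_partition_covering_card[OF lp] by (intro sum.cong) auto
  finally show ?thesis by simp
qed

definition cycle_weight :: "'a set set \<Rightarrow> nat" where
  "cycle_weight P = (\<Prod>B\<in>P. fact (card B - 1))"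

definition cycle_count :: "nat \<Rightarrow> nat \<Rightarrow> nat set set \<Rightarrow> nat" where
  "cycle_count n m P = (if card (singly_covered_minimal n P) = m then cycle_weight P else 0)"

lemma f_lc_eq_sum_cycle_count: "f_lc n m = (\<Sum>P\<in>linked_partitions n. cycle_count n m P)"
proof -
  let ?L = "{P \<in> linked_partitions n. card (singly_covered_minimal n P) = m}"
  have blocks: "finite P" "\<And>B. B \<in> P \<Longrightarrow> finite B \<and> B \<noteq> {}" if "P \<in> ?L" for P
  proof -
    have lp: "linked_partition n P" using that unfolding linked_partitions_def by blast
    show "finite P" by (rule linked_partition_finite[OF lp])
    show "finite B \<and> B \<noteq> {}" if "B \<in> P" for B
      using linked_partition_block[OF lp that] by blast
  qed
  have "{(P, A). linked_cycle n P A \<and> card (singly_covered_minimal n P) = m} = Sigma ?L arrangements"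
    unfolding linked_cycle_def arrangements_def linked_partitions_def by auto
  then have "f_lc n m = (\<Sum>P\<in>?L. card (arrangements P))"
    unfolding f_lc_def using finite_linked_partitions finite_arrangements[OF blocks]
    by (simp add: card_SigmaI)
  also have "\<dots> = (\<Sum>P\<in>?L. cycle_weight P)"
    unfolding cycle_weight_def using card_arrangements[OF blocks] by simp
  finally show ?thesis
    unfolding cycle_count_def using finite_linked_partitions by (simp add: sum.inter_filter)
qed

section \<open>Adding the largest element\<close>

datatype extension = Add_singleton | Add_to "nat set" | Add_pair nat

fun extend :: "nat \<Rightarrow> nat set set \<Rightarrow> extension \<Rightarrow> nat set set" where
  "extend n Q Add_singleton = insert {n} Q"
| "extend n Q (Add_to B) = insert (insert n B) (Q - {B})"
| "extend n Q (Add_pair b) = insert {b, n} Q"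

definition extensions :: "nat \<Rightarrow> nat set set \<Rightarrow> extension set" where
  "extensions k Q = insert Add_singleton (Add_to ` Q \<union> Add_pair ` singly_covered_nonminimal k Q)"

lemma finite_extensions: "finite Q \<Longrightarrow> finite (extensions k Q)"
  unfolding extensions_def singly_covered_nonminimal_def by simp

lemma sum_extensions:
  assumes "finite Q"
  shows "(\<Sum>x\<in>extensions k Q. h x) =
    h Add_singleton + (\<Sum>B\<in>Q. h (Add_to B)) + (\<Sum>b\<in>singly_covered_nonminimal k Q. h (Add_pair b))"
proof -
  have fin: "finite (singly_covered_nonminimal k Q)"
    unfolding singly_covered_nonminimal_def by simp
  have "(\<Sum>x\<in>extensions k Q. h x) = h Add_singleton
      + (\<Sum>x\<in>Add_to ` Q \<union> Add_pair ` singly_covered_nonminimal k Q. h x)"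
    unfolding extensions_def using assms fin by (subst sum.insert) auto
  also have "(\<Sum>x\<in>Add_to ` Q \<union> Add_pair ` singly_covered_nonminimal k Q. h x)
      = (\<Sum>x\<in>Add_to ` Q. h x) + (\<Sum>x\<in>Add_pair ` singly_covered_nonminimal k Q. h x)"
    by (rule sum.union_disjoint) (use assms fin in auto)
  also have "\<dots> = (\<Sum>B\<in>Q. h (Add_to B)) + (\<Sum>b\<in>singly_covered_nonminimal k Q. h (Add_pair b))"
    by (simp add: sum.reindex inj_on_def)
  finally show ?thesis by (simp add: add.assoc)
qed

definition block_of :: "'a \<Rightarrow> 'a set set \<Rightarrow> 'a set" where
  "block_of x P = (THE B. B \<in> P \<and> x \<in> B)"

lemma block_of_eq:
  assumes "B \<in> P" "x \<in> B" "\<And>C. C \<in> P \<Longrightarrow> x \<in> C \<Longrightarrow> C = B"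
  shows "block_of x P = B"
  unfolding block_of_def
proof (rule the_equality)
  show "B \<in> P \<and> x \<in> B" using assms(1,2) ..
qed (use assms(3) in blast)

text \<open>A block \<open>{b, n}\<close> comes from \<open>Add_pair b\<close> exactly when \<open>b\<close> also lies in another block;
  otherwise it comes from \<open>Add_to {b}\<close>.\<close>
definition decompose :: "nat \<Rightarrow> nat set set \<Rightarrow> nat set set \<times> extension" where
  "decompose n P = (let B = block_of n P in
     if B = {n} then (P - {B}, Add_singleton)
     else if card B = 2 \<and> (\<exists>F\<in>P - {B}. Min B \<in> F) then (P - {B}, Add_pair (Min B))
     else (insert (B - {n}) (P - {B}), Add_to (B - {n})))"

context
  fixes k :: nat and Q :: "nat set set"
  assumes lp: "linked_partition k Q"
begin

lemma linked_partition_block_below: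
  assumes "C \<in> Q"
  shows "C \<noteq> {}" "C \<subseteq> {1..Suc k}" "Suc k \<notin> C" "\<forall>x\<in>C. x < Suc k"
  using linked_partition_block[OF lp assms] by auto

lemma linked_partition_add_singleton: "linked_partition (Suc k) (insert {Suc k} Q)"
proof (rule linked_partition_insert)
  show "\<forall>C\<in>Q. C \<noteq> {} \<and> C \<subseteq> {1..Suc k}" using linked_partition_block_below by blast
  show "\<Union>Q \<union> {Suc k} = {1..Suc k}" using lp unfolding linked_partition_def by auto
  show "pairwise nearly_disjoint Q" using lp unfolding linked_partition_iff by blast
  show "nearly_disjoint {Suc k} F" if "F \<in> Q" for F
    using linked_partition_block_below(3)[OF that] by (intro nearly_disjoint_if_disjoint) blast
qed auto

lemma decompose_add_singleton: "decompose (Suc k) (insert {Suc k} Q) = (Q, Add_singleton)"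
proof -
  have "block_of (Suc k) (insert {Suc k} Q) = {Suc k}"
    using linked_partition_block_below(3) by (intro block_of_eq) auto
  moreover have "insert {Suc k} Q - {{Suc k}} = Q" using linked_partition_block_below(3) by blast
  ultimately show ?thesis unfolding decompose_def by simp
qed

lemma singly_covered_minimal_add_singleton:
  "singly_covered_minimal (Suc k) (insert {Suc k} Q) = insert (Suc k) (singly_covered_minimal k Q)"
proof (rule set_eqI)
  fix i
  have "{C \<in> insert {Suc k} Q. Suc k \<in> C} = {{Suc k}}"
    using linked_partition_block_below(3) by blast
  then have "Suc k \<in> singly_covered_minimal (Suc k) (insert {Suc k} Q)"
    unfolding singly_covered_minimal_def using linked_partition_block_below(3) by auto
  then show "i \<in> singly_covered_minimal (Suc k) (insert {Suc k} Q)
      \<longleftrightarrow> i \<in> insert (Suc k) (singly_covered_minimal k Q)"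
    using singly_covered_minimal_insert_avoiding[of i "{Suc k}"] by (cases "i = Suc k") auto
qed

lemma cycle_weight_add_singleton: "cycle_weight (insert {Suc k} Q) = cycle_weight Q"
proof -
  have "{Suc k} \<notin> Q" using linked_partition_block_below(3) by blast
  then show ?thesis unfolding cycle_weight_def using linked_partition_finite[OF lp] by simp
qed

context
  fixes B :: "nat set"
  assumes B: "B \<in> Q"
begin

lemma linked_partition_add_to: "linked_partition (Suc k) (insert (insert (Suc k) B) (Q - {B}))"
proof (rule linked_partition_insert)
  show "\<forall>C\<in>Q - {B}. C \<noteq> {} \<and> C \<subseteq> {1..Suc k}" using linked_partition_block_below by blast
  show "insert (Suc k) B \<subseteq> {1..Suc k}" using linked_partition_block_below(2)[OF B] by simp
  have "\<Union>(Q - {B}) \<union> B = \<Union>Q" using B by blast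
  then show "\<Union>(Q - {B}) \<union> insert (Suc k) B = {1..Suc k}"
    using lp unfolding linked_partition_def by auto
  show "pairwise nearly_disjoint (Q - {B})"
    using lp unfolding linked_partition_iff by (blast intro: pairwise_subset)
  show "nearly_disjoint (insert (Suc k) B) F" if "F \<in> Q - {B}" for F
    using that linked_partition_block[OF lp B] linked_partition_block_below B
    by (intro nearly_disjoint_insert_greater linked_partition_nearly_disjoint[OF lp B]) auto
qed simp

lemma decompose_add_to: "decompose (Suc k) (insert (insert (Suc k) B) (Q - {B})) = (Q, Add_to B)"
proof -
  let ?B' = "insert (Suc k) B"
  have fin: "finite B" "B \<noteq> {}" "\<forall>x\<in>B. x < Suc k" "Suc k \<notin> B"
    using linked_partition_block[OF lp B] linked_partition_block_below[OF B] by auto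
  have blk: "block_of (Suc k) (insert ?B' (Q - {B})) = ?B'"
    using linked_partition_block_below(3) by (intro block_of_eq) auto
  have rest: "insert ?B' (Q - {B}) - {?B'} = Q - {B}"
    using linked_partition_block_below(3) by blast
  \<comment> \<open>a singleton block \<open>{y}\<close> shares \<open>y\<close> with no other block\<close>
  have not_pair: "\<not> (card ?B' = 2 \<and> (\<exists>F\<in>Q - {B}. Min ?B' \<in> F))"
  proof
    assume pair: "card ?B' = 2 \<and> (\<exists>F\<in>Q - {B}. Min ?B' \<in> F)"
    then have "card B = 1" using fin by simp
    then obtain y where "B = {y}" by (auto simp: card_Suc_eq)
    moreover obtain F where "F \<in> Q - {B}" "Min ?B' \<in> F" using pair by blast
    ultimately show False
      using linked_partition_singleton_block[OF lp] B fin
      by (metis DiffE Min_insert_greater Min_singleton singletonI)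
  qed
  have "?B' \<noteq> {Suc k}" using fin by blast
  then show ?thesis
    unfolding decompose_def Let_def blk rest using not_pair fin B by (simp add: insert_absorb)
qed

lemma singly_covered_minimal_add_to:
  "singly_covered_minimal (Suc k) (insert (insert (Suc k) B) (Q - {B})) = singly_covered_minimal k Q"
proof -
  have fin: "finite B" "B \<noteq> {}" "\<forall>x\<in>B. x < Suc k"
    using linked_partition_block[OF lp B] linked_partition_block_below[OF B] by auto
  have Min_eq: "Min (insert (Suc k) B) = Min B" using Min_insert_greater[OF fin] .
  define \<phi> where "\<phi> C = (if C = B then insert (Suc k) B else C)" for C
  have P_eq: "insert (insert (Suc k) B) (Q - {B}) = \<phi> ` Q" unfolding \<phi>_def using B by auto
  have inj: "inj_on \<phi> Q" unfolding \<phi>_def inj_on_def using linked_partition_block_below(3) B by auto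
  have same: "i \<in> singly_covered_minimal (Suc k) (\<phi> ` Q) \<longleftrightarrow> i \<in> singly_covered_minimal k Q"
    if "i \<noteq> Suc k" for i
  proof (rule singly_covered_minimal_cong[where \<phi> = \<phi>])
    show "{C \<in> \<phi> ` Q. i \<in> C} = \<phi> ` {C \<in> Q. i \<in> C}" using that unfolding \<phi>_def by auto
    show "inj_on \<phi> {C \<in> Q. i \<in> C}" using inj by (rule inj_on_subset) blast
  qed (use Min_eq that in \<open>auto simp: \<phi>_def\<close>)
  have "Min B < Suc k" using fin(3) Min_in[OF fin(1,2)] by blast
  then have "Suc k \<notin> singly_covered_minimal (Suc k) (\<phi> ` Q)"
    unfolding singly_covered_minimal_def \<phi>_def using B Min_eq by force
  moreover have "Suc k \<notin> singly_covered_minimal k Q"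
    unfolding singly_covered_minimal_def by simp
  ultimately show ?thesis unfolding P_eq using same by (metis set_eqI)
qed

lemma cycle_weight_add_to:
  "cycle_weight (insert (insert (Suc k) B) (Q - {B})) = card B * cycle_weight Q"
proof -
  have finQ: "finite Q" by (rule linked_partition_finite[OF lp])
  have fin: "finite B" "B \<noteq> {}" "Suc k \<notin> B"
    using linked_partition_block[OF lp B] linked_partition_block_below[OF B] by auto
  have "insert (Suc k) B \<notin> Q - {B}" using linked_partition_block_below(3) by blast
  then have "cycle_weight (insert (insert (Suc k) B) (Q - {B}))
      = fact (card B) * (\<Prod>C\<in>Q - {B}. fact (card C - 1))"
    unfolding cycle_weight_def using finQ fin by simp
  also have "fact (card B) = card B * fact (card B - 1)"
    using fin by (simp add: fact_reduce card_gt_0_iff)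
  also have "fact (card B - 1) * (\<Prod>C\<in>Q - {B}. fact (card C - 1)) = cycle_weight Q"
    unfolding cycle_weight_def by (simp add: prod.remove[OF finQ B])
  ultimately show ?thesis by (simp add: mult.assoc)
qed

end

context
  fixes b :: nat
  assumes b: "b \<in> singly_covered_nonminimal k Q"
begin

lemma linked_partition_add_pair: "linked_partition (Suc k) (insert {b, Suc k} Q)"
proof (rule linked_partition_insert)
  obtain F0 where F0: "F0 \<in> Q" "b \<noteq> Min F0" "\<forall>G\<in>Q. b \<in> G \<longrightarrow> G = F0"
    and b_range: "b \<in> {1..k}"
    using b unfolding singly_covered_nonminimal_iff by blast
  show "\<forall>C\<in>Q. C \<noteq> {} \<and> C \<subseteq> {1..Suc k}" using linked_partition_block_below by blast
  show "{b, Suc k} \<subseteq> {1..Suc k}" using b_range by auto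
  show "\<Union>Q \<union> {b, Suc k} = {1..Suc k}"
    using lp b_range unfolding linked_partition_def by auto
  show "pairwise nearly_disjoint Q" using lp unfolding linked_partition_iff by blast
  show "nearly_disjoint {b, Suc k} F" if F: "F \<in> Q" for F
  proof (rule nearly_disjoint_pair)
    show "b < Suc k" using b_range by simp
    show "Suc k \<notin> F" using linked_partition_block_below(3)[OF F] .
    show "b \<noteq> Min F" if "b \<in> F" using F0(2,3) F that by blast
  qed
qed simp

lemma decompose_add_pair: "decompose (Suc k) (insert {b, Suc k} Q) = (Q, Add_pair b)"
proof -
  obtain F where F: "F \<in> Q" "b \<in> F" and b_range: "b \<in> {1..k}"
    using b unfolding singly_covered_nonminimal_iff by blast
  have blk: "block_of (Suc k) (insert {b, Suc k} Q) = {b, Suc k}"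
    using linked_partition_block_below(3) by (intro block_of_eq) auto
  have "Min {b, Suc k} = b" "card {b, Suc k} = 2" "{b, Suc k} \<noteq> {Suc k}"
    using b_range by auto
  moreover have "insert {b, Suc k} Q - {{b, Suc k}} = Q" using linked_partition_block_below(3) by blast
  ultimately show ?thesis
    unfolding decompose_def Let_def blk using F linked_partition_block_below(3) by auto
qed

lemma singly_covered_minimal_add_pair:
  "singly_covered_minimal (Suc k) (insert {b, Suc k} Q) = singly_covered_minimal k Q"
proof (rule set_eqI)
  fix i
  obtain F where F: "F \<in> Q" "b \<in> F" "b \<noteq> Min F" and b_range: "b \<in> {1..k}"
    using b unfolding singly_covered_nonminimal_iff by blast
  have "Min {b, Suc k} = b" using b_range by simp
  then have "Suc k \<notin> singly_covered_minimal (Suc k) (insert {b, Suc k} Q)"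
    "b \<notin> singly_covered_minimal (Suc k) (insert {b, Suc k} Q)"
    "b \<notin> singly_covered_minimal k Q" "Suc k \<notin> singly_covered_minimal k Q"
    using b_range F unfolding singly_covered_minimal_def by auto
  then show "i \<in> singly_covered_minimal (Suc k) (insert {b, Suc k} Q)
      \<longleftrightarrow> i \<in> singly_covered_minimal k Q"
    using singly_covered_minimal_insert_avoiding[of i "{b, Suc k}"]
    by (cases "i = Suc k \<or> i = b") auto
qed

lemma cycle_weight_add_pair: "cycle_weight (insert {b, Suc k} Q) = cycle_weight Q"
proof -
  have "card {b, Suc k} = 2" using b unfolding singly_covered_nonminimal_iff by auto
  moreover have "{b, Suc k} \<notin> Q" using linked_partition_block_below(3) by blast
  ultimately show ?thesis unfolding cycle_weight_def using linked_partition_finite[OF lp] by simp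
qed

end

lemma linked_partition_extend:
  "x \<in> extensions k Q \<Longrightarrow> linked_partition (Suc k) (extend (Suc k) Q x)"
  unfolding extensions_def
  using linked_partition_add_singleton linked_partition_add_to linked_partition_add_pair by auto

lemma decompose_extend: "x \<in> extensions k Q \<Longrightarrow> decompose (Suc k) (extend (Suc k) Q x) = (Q, x)"
  unfolding extensions_def using decompose_add_singleton decompose_add_to decompose_add_pair by auto

lemma sum_cycle_count_extend:
  "(\<Sum>x\<in>extensions k Q. cycle_count (Suc k) m (extend (Suc k) Q x))
    = (if m = 0 then 0 else cycle_count k (m - 1) Q) + (2 * k - m) * cycle_count k m Q"
proof -
  let ?s = "card (singly_covered_minimal k Q)"
  let ?cc = "\<lambda>x. cycle_count (Suc k) m (extend (Suc k) Q x)"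
  have "finite (singly_covered_minimal k Q)" "Suc k \<notin> singly_covered_minimal k Q"
    unfolding singly_covered_minimal_def by simp_all
  then have "card (singly_covered_minimal (Suc k) (insert {Suc k} Q)) = ?s + 1"
    unfolding singly_covered_minimal_add_singleton by simp
  then have single: "?cc Add_singleton = (if m = 0 then 0 else cycle_count k (m - 1) Q)"
    unfolding cycle_count_def by (auto simp: cycle_weight_add_singleton)
  have add_to: "?cc (Add_to B) = card B * cycle_count k m Q" if "B \<in> Q" for B
    unfolding cycle_count_def
    by (simp add: singly_covered_minimal_add_to[OF that] cycle_weight_add_to[OF that])
  have add_pair: "?cc (Add_pair b) = cycle_count k m Q" if "b \<in> singly_covered_nonminimal k Q" for b
    unfolding cycle_count_def
    by (simp add: singly_covered_minimal_add_pair[OF that] cycle_weight_add_pair[OF that])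
  have "(\<Sum>B\<in>Q. card B) + card (singly_covered_nonminimal k Q) = 2 * k - ?s"
    using linked_partition_double_count[OF lp] by arith
  then have moves: "(\<Sum>B\<in>Q. card B) * cycle_count k m Q
      + card (singly_covered_nonminimal k Q) * cycle_count k m Q = (2 * k - m) * cycle_count k m Q"
    unfolding add_mult_distrib[symmetric] by (cases "?s = m") (simp_all add: cycle_count_def)
  have "(\<Sum>x\<in>extensions k Q. ?cc x) = ?cc Add_singleton + (\<Sum>B\<in>Q. ?cc (Add_to B))
      + (\<Sum>b\<in>singly_covered_nonminimal k Q. ?cc (Add_pair b))"
    by (rule sum_extensions[OF linked_partition_finite[OF lp]])
  also have "(\<Sum>B\<in>Q. ?cc (Add_to B)) = (\<Sum>B\<in>Q. card B) * cycle_count k m Q"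
    using add_to by (simp add: sum_distrib_right)
  also have "(\<Sum>b\<in>singly_covered_nonminimal k Q. ?cc (Add_pair b))
      = card (singly_covered_nonminimal k Q) * cycle_count k m Q"
    using add_pair by simp
  finally show ?thesis using single moves by (simp add: add.assoc)
qed

end

section \<open>Removing the largest element\<close>

context
  fixes k :: nat and P :: "nat set set"
  assumes lp: "linked_partition (Suc k) P"
begin

lemma linked_partition_other_block:
  assumes "B \<in> P" "Suc k \<in> B" "C \<in> P" "C \<noteq> B"
  shows "C \<noteq> {}" "C \<subseteq> {1..k}"
proof -
  have "Suc k \<notin> C" using linked_partition_last_block_unique[OF lp] assms by blast
  then show "C \<subseteq> {1..k}" using linked_partition_block(2)[OF lp assms(3)] by (auto simp: le_Suc_eq)
  show "C \<noteq> {}" using linked_partition_block(1)[OF lp assms(3)] .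
qed

lemma Union_remove_last_block:
  assumes "B \<in> P" "Suc k \<in> B"
  shows "\<Union>(P - {B}) \<union> (B - {Suc k}) = {1..k}"
proof -
  have "Suc k \<notin> \<Union>(P - {B})" using linked_partition_last_block_unique[OF lp] assms by blast
  then have "\<Union>(P - {B}) \<union> (B - {Suc k}) = (\<Union>(P - {B}) \<union> B) - {Suc k}" by blast
  also have "\<dots> = {1..Suc k} - {Suc k}"
    using lp assms(1) unfolding linked_partition_def by blast
  also have "\<dots> = {1..k}" by auto
  finally show ?thesis .
qed

lemma linked_partition_remove_block:
  assumes "B \<in> P" "Suc k \<in> B" "B - {Suc k} \<subseteq> \<Union>(P - {B})"
  shows "linked_partition k (P - {B})"
  unfolding linked_partition_iff
proof (intro conjI)
  show "\<forall>C\<in>P - {B}. C \<noteq> {} \<and> C \<subseteq> {1..k}"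
    using linked_partition_other_block assms(1,2) by blast
  show "\<Union>(P - {B}) = {1..k}"
    using Union_remove_last_block[OF assms(1,2)] assms(3) by blast
  show "pairwise nearly_disjoint (P - {B})"
    using lp unfolding linked_partition_iff by (blast intro: pairwise_subset)
qed

lemma linked_partition_remove_pair:
  assumes B: "B \<in> P" "Suc k \<in> B" "card B = 2" and F: "F \<in> P - {B}" "Min B \<in> F"
  shows "linked_partition k (P - {B})" and "Min B \<in> singly_covered_nonminimal k (P - {B})"
    and "extend (Suc k) (P - {B}) (Add_pair (Min B)) = P"
proof -
  obtain b where b_eq: "B - {Suc k} = {b}"
    using B card_1_singleton_iff[of "B - {Suc k}"] linked_partition_block(3)[OF lp B(1)]
    by (auto simp del: One_nat_def)
  then have B_eq: "B = {b, Suc k}" using B(2) by blast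
  have "b \<in> B" "b \<noteq> Suc k" using b_eq by auto
  then have "b \<in> {1..k}" using linked_partition_block(2)[OF lp B(1)] by (auto simp: le_Suc_eq)
  then have b: "b \<in> {1..k}" "Min B = b" unfolding B_eq by auto
  then show "extend (Suc k) (P - {B}) (Add_pair (Min B)) = P" using B(1) B_eq by auto
  show "linked_partition k (P - {B})"
    using F b B_eq by (intro linked_partition_remove_block[OF B(1,2)]) auto
  have "b \<noteq> Min F"
    using nearly_disjoint_Min_xor[of B F b] linked_partition_nearly_disjoint[OF lp B(1)] F b B_eq
    by auto
  moreover have "G = F" if "G \<in> P - {B}" "b \<in> G" for G
    using linked_partition_no_three_blocks[OF lp B(1), of F G b] F that b B_eq by blast
  ultimately show "Min B \<in> singly_covered_nonminimal k (P - {B})"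
    unfolding singly_covered_nonminimal_iff using b F by blast
qed

lemma linked_partition_remove_from_block:
  assumes B: "B \<in> P" "Suc k \<in> B" "B \<noteq> {Suc k}"
    and pair: "card B = 2 \<Longrightarrow> \<forall>F\<in>P - {B}. Min B \<notin> F"
  shows "linked_partition k (insert (B - {Suc k}) (P - {B}))"
    and "extend (Suc k) (insert (B - {Suc k}) (P - {B})) (Add_to (B - {Suc k})) = P"
proof -
  let ?B = "B - {Suc k}"
  have fin: "finite ?B" "?B \<noteq> {}" "\<forall>x\<in>?B. x < Suc k"
    using linked_partition_block[OF lp B(1)] B(2,3) by auto
  have B_eq: "B = insert (Suc k) ?B" using B(2) by blast
  have Min_eq: "Min B = Min ?B"
    using Min_insert_greater[OF fin] B_eq by simp
  have "?B \<notin> P"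
    using linked_partition_inj_on_Min[OF lp] B(1,2) Min_eq by (auto dest: inj_onD)
  then have "insert ?B (P - {B}) - {?B} = P - {B}" by blast
  then show "extend (Suc k) (insert ?B (P - {B})) (Add_to ?B) = P"
    using B(1) B_eq[symmetric] by (simp add: insert_absorb)
  show "linked_partition k (insert ?B (P - {B}))"
  proof (rule linked_partition_insert)
    show "\<forall>C\<in>P - {B}. C \<noteq> {} \<and> C \<subseteq> {1..k}"
      using linked_partition_other_block B(1,2) by blast
    show "?B \<noteq> {}" by (fact fin(2))
    show "?B \<subseteq> {1..k}" using linked_partition_block(2)[OF lp B(1)] by (auto simp: le_Suc_eq)
    show "\<Union>(P - {B}) \<union> ?B = {1..k}" by (rule Union_remove_last_block[OF B(1,2)])
    show "pairwise nearly_disjoint (P - {B})"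
      using lp unfolding linked_partition_iff by (blast intro: pairwise_subset)
    show "nearly_disjoint ?B F" if F: "F \<in> P - {B}" "F \<noteq> ?B" for F
    proof (rule nearly_disjoint_remove_greater[OF fin])
      show "Suc k \<notin> F" using linked_partition_last_block_unique[OF lp] B F by blast
      show "nearly_disjoint (insert (Suc k) ?B) F"
        using linked_partition_nearly_disjoint[OF lp B(1)] F B_eq by auto
      show "Min ?B \<notin> F" if "card ?B = 1"
      proof -
        have "card B = card (insert (Suc k) ?B)" using B_eq by (rule arg_cong)
        also have "\<dots> = card ?B + 1" using card_insert_disjoint[OF fin(1), of "Suc k"] by simp
        finally have "card B = card ?B + 1" .
        then show ?thesis using pair F Min_eq that by simp
      qed
    qed
  qed
qed

lemma extend_decompose:
  "decompose (Suc k) P \<in> (SIGMA Q:linked_partitions k. extensions k Q)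
   \<and> (case decompose (Suc k) P of (Q, x) \<Rightarrow> extend (Suc k) Q x) = P"
proof -
  have "Suc k \<in> \<Union>P" using lp unfolding linked_partition_def by auto
  then obtain B where B: "B \<in> P" "Suc k \<in> B" by blast
  have blk: "block_of (Suc k) P = B"
    using block_of_eq[OF B] linked_partition_last_block_unique[OF lp _ _ B] by blast
  consider (single) "B = {Suc k}"
    | (pair) "B \<noteq> {Suc k}" "card B = 2" "\<exists>F\<in>P - {B}. Min B \<in> F"
    | (join) "B \<noteq> {Suc k}" "\<not> (card B = 2 \<and> (\<exists>F\<in>P - {B}. Min B \<in> F))"
    by blast
  then show ?thesis
  proof cases
    case single
    have "decompose (Suc k) P = (P - {B}, Add_singleton)"
      unfolding decompose_def blk single by simp
    moreover have "linked_partition k (P - {B})"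
      using single by (intro linked_partition_remove_block[OF B]) auto
    moreover have "extend (Suc k) (P - {B}) Add_singleton = P" using single B by auto
    ultimately show ?thesis unfolding linked_partitions_def extensions_def by simp
  next
    case pair
    then obtain F where "F \<in> P - {B}" "Min B \<in> F" by blast
    note removed = linked_partition_remove_pair[OF B pair(2) this]
    have "decompose (Suc k) P = (P - {B}, Add_pair (Min B))"
      unfolding decompose_def blk Let_def using pair by simp
    then show ?thesis using removed unfolding linked_partitions_def extensions_def by simp
  next
    case join
    then have "card B = 2 \<Longrightarrow> \<forall>F\<in>P - {B}. Min B \<notin> F" by blast
    note removed = linked_partition_remove_from_block[OF B join(1) this]
    have "decompose (Suc k) P = (insert (B - {Suc k}) (P - {B}), Add_to (B - {Suc k}))"
      unfolding decompose_def blk Let_def using join by simp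
    then show ?thesis using removed unfolding linked_partitions_def extensions_def by simp
  qed
qed

end

lemma bij_betw_extend:
  "bij_betw (\<lambda>(Q, x). extend (Suc k) Q x) (SIGMA Q:linked_partitions k. extensions k Q)
     (linked_partitions (Suc k))"
proof (rule bij_betw_byWitness[where f' = "decompose (Suc k)"])
  show "\<forall>y\<in>SIGMA Q:linked_partitions k. extensions k Q.
      decompose (Suc k) (case y of (Q, x) \<Rightarrow> extend (Suc k) Q x) = y"
  proof
    fix y assume "y \<in> (SIGMA Q:linked_partitions k. extensions k Q)"
    then obtain Q x where "y = (Q, x)" "linked_partition k Q" "x \<in> extensions k Q"
      unfolding linked_partitions_def by blast
    then show "decompose (Suc k) (case y of (Q, x) \<Rightarrow> extend (Suc k) Q x) = y"
      using decompose_extend by simp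
  qed
  show "(\<lambda>(Q, x). extend (Suc k) Q x) ` (SIGMA Q:linked_partitions k. extensions k Q)
      \<subseteq> linked_partitions (Suc k)"
  proof
    fix P assume "P \<in> (\<lambda>(Q, x). extend (Suc k) Q x) ` (SIGMA Q:linked_partitions k. extensions k Q)"
    then obtain Q x where "(Q, x) \<in> (SIGMA Q:linked_partitions k. extensions k Q)"
      and "P = extend (Suc k) Q x" by auto
    then show "P \<in> linked_partitions (Suc k)"
      unfolding linked_partitions_def using linked_partition_extend by simp
  qed
  show "\<forall>P\<in>linked_partitions (Suc k). (case decompose (Suc k) P of (Q, x) \<Rightarrow> extend (Suc k) Q x) = P"
    using extend_decompose unfolding linked_partitions_def by simp
  show "decompose (Suc k) ` linked_partitions (Suc k) \<subseteq> (SIGMA Q:linked_partitions k. extensions k Q)"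
    using extend_decompose unfolding linked_partitions_def by blast
qed

lemma f_lc_Suc: "f_lc (Suc k) m = (if m = 0 then 0 else f_lc k (m - 1)) + (2 * k - m) * f_lc k m"
proof -
  let ?S = "SIGMA Q:linked_partitions k. extensions k Q"
  have "f_lc (Suc k) m = (\<Sum>y\<in>?S. cycle_count (Suc k) m ((\<lambda>(Q, x). extend (Suc k) Q x) y))"
    unfolding f_lc_eq_sum_cycle_count by (rule sum.reindex_bij_betw[OF bij_betw_extend, symmetric])
  also have "\<dots> = (\<Sum>Q\<in>linked_partitions k. \<Sum>x\<in>extensions k Q. cycle_count (Suc k) m (extend (Suc k) Q x))"
    using finite_linked_partitions finite_extensions linked_partition_finite
    unfolding linked_partitions_def by (subst sum.Sigma) (auto simp: split_def)
  also have "\<dots> = (\<Sum>Q\<in>linked_partitions k.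
      (if m = 0 then 0 else cycle_count k (m - 1) Q) + (2 * k - m) * cycle_count k m Q)"
    using sum_cycle_count_extend unfolding linked_partitions_def by simp
  also have "\<dots> = (if m = 0 then 0 else f_lc k (m - 1)) + (2 * k - m) * f_lc k m"
    unfolding f_lc_eq_sum_cycle_count by (simp add: sum.distrib sum_distrib_left)
  finally show ?thesis .
qed

lemma f_lc_0: "f_lc 0 m = (if m = 0 then 1 else 0)"
proof -
  have "linked_partitions 0 = {{}}"
    unfolding linked_partitions_def linked_partition_def by auto
  moreover have "singly_covered_minimal 0 {} = {}"
    unfolding singly_covered_minimal_def by simp
  ultimately show ?thesis
    unfolding f_lc_eq_sum_cycle_count cycle_count_def cycle_weight_def by simp
qed

lemma f_lc_Suc_0: "f_lc (Suc k) 0 = 0"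
  by (induction k) (simp_all add: f_lc_Suc f_lc_0)

lemma f_lc_eq_0_if_less: "n < m \<Longrightarrow> f_lc n m = 0"
  by (induction n arbitrary: m) (simp_all add: f_lc_Suc f_lc_0)

theorem proposition4p5:
  shows "f_lc 1 1 = 1
    \<and> (\<forall>n\<ge>1. f_lc n 0 = 0)
    \<and> (\<forall>n m. n < m \<longrightarrow> f_lc n m = 0)
    \<and> (\<forall>n\<ge>2. \<forall>m\<ge>1. int (f_lc n m) =
          (2 * (int n - 1) - int m) * int (f_lc (n - 1) m) + int (f_lc (n - 1) (m - 1)))"
proof (intro conjI allI impI)
  show "f_lc 1 1 = 1" using f_lc_Suc[of 0 1] by (simp add: f_lc_0)
next
  fix n :: nat assume "n \<ge> 1"
  then show "f_lc n 0 = 0" using f_lc_Suc_0 by (cases n) auto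
next
  fix n m :: nat assume "n < m"
  then show "f_lc n m = 0" by (rule f_lc_eq_0_if_less)
next
  fix n m :: nat assume "n \<ge> 2" "m \<ge> 1"
  then obtain k where k: "n = Suc k" by (cases n) auto
  have "int (2 * k - m) * int (f_lc k m) = (2 * int k - int m) * int (f_lc k m)"
    using f_lc_eq_0_if_less[of k m] by (cases "m \<le> 2 * k") auto
  then show "int (f_lc n m) = (2 * (int n - 1) - int m) * int (f_lc (n - 1) m) + int (f_lc (n - 1) (m - 1))"
    using f_lc_Suc[of k m] k \<open>m \<ge> 1\<close> by simp
qed

end
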